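(* For every $n\ge25$ and every integer $t$ with $\frac{n^2}{8}+\frac{n}{2}-2\le t\le \frac{n^2}{4}+\frac{n^2}{16}-3n+\frac{205}{16}$, there exists an $(n,t)$-blocker.
   Context: For a convex $n$-gon: an edge is a segment between two vertices; diagonals are edges that are not sides of the polygon. Two edges cross if they share an interior point. A triangulation is a maximal set of pairwise non-crossing diagonals. A blocker is a set $B$ of diagonals having a diagonal in common with every triangulation; it is saturated if for every $e\in B$, $B\setminus\{e\}$ is not a blocker. An $(n,t)$-blocker is a saturated blocker of size $t$ for a convex $n$-gon. *)

theory Defs
  imports Complex_Main
begin

text \<open>Convex n-gon with vertices 0,...,n-1 in cyclic order. An edge is a pair (i,j)
  with i < j < n. Sides are (i, i+1) and (0, n-1); diagonals are the other edges.\<close>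

definition diagonal :: "nat \<Rightarrow> nat \<times> nat \<Rightarrow> bool" where
  "diagonal n e \<longleftrightarrow> (case e of (i, j) \<Rightarrow>
      i < j \<and> j < n \<and> j \<noteq> Suc i \<and> \<not> (i = 0 \<and> j = n - 1))"

text \<open>In convex position two edges share an interior point iff their endpoints
  strictly interleave.\<close>
definition crosses :: "nat \<times> nat \<Rightarrow> nat \<times> nat \<Rightarrow> bool" where
  "crosses e f \<longleftrightarrow> (case e of (a, b) \<Rightarrow> case f of (c, d) \<Rightarrow>
      (a < c \<and> c < b \<and> b < d) \<or> (c < a \<and> a < d \<and> d < b))"

definition noncrossing_diags :: "nat \<Rightarrow> (nat \<times> nat) set \<Rightarrow> bool" where
  "noncrossing_diags n S \<longleftrightarrow> (\<forall>e\<in>S. diagonal n e) \<and> (\<forall>e\<in>S. \<forall>f\<in>S. \<not> crosses e f)"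

definition triangulation :: "nat \<Rightarrow> (nat \<times> nat) set \<Rightarrow> bool" where
  "triangulation n T \<longleftrightarrow> noncrossing_diags n T \<and>
     (\<forall>S. noncrossing_diags n S \<and> T \<subseteq> S \<longrightarrow> S = T)"

definition blocker :: "nat \<Rightarrow> (nat \<times> nat) set \<Rightarrow> bool" where
  "blocker n B \<longleftrightarrow> (\<forall>e\<in>B. diagonal n e) \<and> (\<forall>T. triangulation n T \<longrightarrow> B \<inter> T \<noteq> {})"

definition saturated_blocker :: "nat \<Rightarrow> (nat \<times> nat) set \<Rightarrow> bool" where
  "saturated_blocker n B \<longleftrightarrow> blocker n B \<and> (\<forall>e\<in>B. \<not> blocker n (B - {e}))"

definition nt_blocker :: "nat \<Rightarrow> nat \<Rightarrow> (nat \<times> nat) set \<Rightarrow> bool" where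
  "nt_blocker n t B \<longleftrightarrow> saturated_blocker n B \<and> card B = t"

end

theory Submission
  imports Defs
begin

text \<open>The 10-gon has a saturated blocker \<open>B10\<close> of 15 diagonals. Blow every vertex \<open>k\<close> of the
  10-gon up into an arc of \<open>l\<^sub>k\<close> consecutive vertices of the \<open>n\<close>-gon and keep the diagonals of the
  \<open>n\<close>-gon running between arcs \<open>i\<close> and \<open>j\<close> with \<open>(i, j) \<in> B10\<close>. This is a saturated blocker of
  size \<open>\<Sum> l\<^sub>i l\<^sub>j\<close>: the chords certifying that \<open>B10\<close> blocks lift arcwise, and a noncrossing set
  showing that \<open>B10 - {(i, j)}\<close> is no blocker lifts through one representative vertex per arc,
  the two ends \<open>u, v\<close> of a kept diagonal serving as representatives of arcs \<open>i, j\<close>, while the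
  chords fencing \<open>u\<close> and \<open>v\<close> off inside their arcs cross all other diagonals between these arcs.
  For arc lengths \<open>(p, q, 1, 2, 1, u, 1, 1, v, 1)\<close> the size is
  \<open>2p + q + (p + q)(u + v) + uv + u + 9\<close>; with \<open>u, v\<close> balanced, the sizes for \<open>p + q = P\<close> fill an
  interval, and these intervals chain together over the range of \<open>t\<close>.\<close>

section \<open>Triangulations and blockers\<close>

lemma diagonal_if_crosses:
  assumes "crosses (a, b) (a', b') \<or> crosses (a', b') (a, b)" "b < n" "b' < n"
  shows "diagonal n (a, b)"
  using assms unfolding crosses_def diagonal_def by auto

lemma crosses_imp_endpoint_inside_and_outside:
  assumes "crosses (s, t) (a, b) \<or> crosses (a, b) (s, t)"
  shows "\<exists>z\<in>{a, b}. s < z \<and> z < t" "\<exists>z\<in>{a, b}. z < s \<or> t < z"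
  using assms unfolding crosses_def by auto

lemma crosses_strict_mono_on_iff:
  assumes "strict_mono_on A f" "a \<in> A" "b \<in> A" "a' \<in> A" "b' \<in> A"
  shows "crosses (f a, f b) (f a', f b') \<longleftrightarrow> crosses (a, b) (a', b')"
  unfolding crosses_def by (simp add: strict_mono_on_less[OF assms(1)] assms(2-5))

lemma triangulation_crosses_if_notin:
  assumes T: "triangulation n T" and e: "diagonal n e" "e \<notin> T"
  shows "\<exists>f\<in>T. crosses e f \<or> crosses f e"
proof (rule ccontr)
  assume no_cross: "\<not> ?thesis"
  have "noncrossing_diags n T"
    using T unfolding triangulation_def by blast
  with e(1) no_cross have "noncrossing_diags n (insert e T)"
    unfolding noncrossing_diags_def crosses_def by (auto split: prod.splits)
  then show False
    using T e(2) unfolding triangulation_def by blast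
qed

lemma triangulation_fan_closed:
  assumes T: "triangulation n T"
    and free: "\<forall>f\<in>T. \<not> crosses (i, j) f \<and> \<not> crosses f (i, j)" and "j < n"
    and k: "i < k" "k < j" "(i, k) \<in> T \<or> k = Suc i"
    and last: "\<And>k'. k < k' \<Longrightarrow> k' < j \<Longrightarrow> (i, k') \<notin> T"
  shows "(k, j) \<in> T \<or> j = Suc k"
proof (rule ccontr)
  assume kj: "\<not> ?thesis"
  then have "diagonal n (k, j)"
    using k \<open>j < n\<close> unfolding diagonal_def by auto
  then obtain a b where ab: "(a, b) \<in> T" "crosses (k, j) (a, b) \<or> crosses (a, b) (k, j)"
    using triangulation_crosses_if_notin[OF T] kj by fastforce
  consider "k < a" "a < j" "j < b" | "a < i" "k < b" "b < j" | "a = i" "k < b" "b < j"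
    | "i < a" "a < k" "k < b" "b < j"
    using ab(2) unfolding crosses_def by fastforce
  then show False
  proof cases
    case 1
    then have "crosses (i, j) (a, b)"
      using k unfolding crosses_def by auto
    then show ?thesis
      using free ab(1) by blast
  next
    case 2
    then have "crosses (a, b) (i, j)"
      using k unfolding crosses_def by auto
    then show ?thesis
      using free ab(1) by blast
  next
    case 3
    then show ?thesis
      using last ab(1) by blast
  next
    case 4
    then have "crosses (i, k) (a, b)" "(i, k) \<in> T"
      using k unfolding crosses_def by auto
    then show ?thesis
      using T ab(1) unfolding triangulation_def noncrossing_diags_def by blast
  qed
qed

lemma triangulation_apex:
  assumes T: "triangulation n T"
    and free: "\<forall>f\<in>T. \<not> crosses (i, j) f \<and> \<not> crosses f (i, j)"
    and ij: "Suc i < j" "j < n"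
  obtains k where "i < k" "k < j" "(i, k) \<in> T \<or> k = Suc i" "(k, j) \<in> T \<or> j = Suc k"
proof -
  define K where "K = {k. i < k \<and> k < j \<and> ((i, k) \<in> T \<or> k = Suc i)}"
  define k where "k = Max K"
  have "finite K"
    unfolding K_def by (rule finite_subset[of _ "{..<j}"]) auto
  moreover have "Suc i \<in> K"
    unfolding K_def using ij by auto
  ultimately have "k \<in> K" and k_max: "\<And>k'. k' \<in> K \<Longrightarrow> k' \<le> k"
    unfolding k_def using Max_in Max_ge by blast+
  then have k: "i < k" "k < j" "(i, k) \<in> T \<or> k = Suc i"
    unfolding K_def by auto
  moreover have "(i, k') \<notin> T" if "k < k'" "k' < j" for k'
    using k_max[of k'] that k unfolding K_def by auto
  ultimately show ?thesis
    using triangulation_fan_closed[OF T free ij(2)] that by blast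
qed

lemma noncrossing_diags_extends_to_triangulation:
  assumes "noncrossing_diags n S"
  obtains T where "triangulation n T" "S \<subseteq> T"
proof -
  define F where "F = {S'. noncrossing_diags n S' \<and> S \<subseteq> S'}"
  have "F \<subseteq> Pow ({..<n} \<times> {..<n})"
    unfolding F_def noncrossing_diags_def diagonal_def by (force split: prod.splits)
  then have "finite F"
    by (rule finite_subset) auto
  moreover have "S \<in> F"
    unfolding F_def using assms by auto
  ultimately obtain T where T: "T \<in> F" "\<forall>X\<in>F. T \<subseteq> X \<longrightarrow> X = T"
    using finite_has_maximal[of F] by blast
  then have "triangulation n T"
    unfolding triangulation_def F_def by blast
  with T(1) show ?thesis
    using that unfolding F_def by blast
qed

definition crossed_by :: "(nat \<times> nat) set \<Rightarrow> nat \<times> nat \<Rightarrow> bool" where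
  "crossed_by S e \<longleftrightarrow> (\<exists>s\<in>S. crosses e s \<or> crosses s e)"

lemma not_blocker_if_crossed:
  assumes S: "noncrossing_diags n S" and crossed: "\<forall>e\<in>B. crossed_by S e"
  shows "\<not> blocker n B"
proof
  assume "blocker n B"
  obtain T where T: "triangulation n T" "S \<subseteq> T"
    using noncrossing_diags_extends_to_triangulation[OF S] .
  then obtain e where e: "e \<in> B" "e \<in> T"
    using \<open>blocker n B\<close> unfolding blocker_def by blast
  then obtain s where "s \<in> T" "crosses e s \<or> crosses s e"
    using crossed T(2) unfolding crossed_by_def by blast
  with e(2) T(1) show False
    unfolding triangulation_def noncrossing_diags_def by blast
qed

lemma saturated_blockerI:
  assumes "blocker n B"
    and "\<forall>e\<in>B. \<exists>S. noncrossing_diags n S \<and> (\<forall>b\<in>B - {e}. crossed_by S b)"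
  shows "saturated_blocker n B"
  unfolding saturated_blocker_def
  using assms not_blocker_if_crossed[of n _ "B - {_}"] by metis

text \<open>If a triangulation avoids \<open>B\<close>, then every chord of \<open>U\<close> lying in it (or being the outer side)
  is the side of a triangle with a shorter chord of \<open>U\<close> as another side, which is absurd.\<close>
definition forcing_chords :: "nat \<Rightarrow> (nat \<times> nat) set \<Rightarrow> (nat \<times> nat) set \<Rightarrow> bool" where
  "forcing_chords n B U \<longleftrightarrow> (0, n - 1) \<in> U \<and> (\<forall>(a, b)\<in>U. Suc a < b \<and> b < n) \<and>
     (\<forall>(a, b)\<in>U. \<forall>k\<in>{a<..<b}. (a, k) \<in> B \<union> U \<or> (k, b) \<in> B \<union> U)"

lemma forcing_chordsI:
  assumes "(0, n - 1) \<in> U" "\<And>a b. (a, b) \<in> U \<Longrightarrow> Suc a < b \<and> b < n"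
    and "\<And>a b k. (a, b) \<in> U \<Longrightarrow> a < k \<Longrightarrow> k < b \<Longrightarrow> (a, k) \<in> B \<union> U \<or> (k, b) \<in> B \<union> U"
  shows "forcing_chords n B U"
  using assms unfolding forcing_chords_def by (simp add: Ball_def split_paired_all del: Un_iff)

lemma forcing_chordsD:
  assumes "forcing_chords n B U"
  shows "(0, n - 1) \<in> U" "\<And>a b. (a, b) \<in> U \<Longrightarrow> Suc a < b \<and> b < n"
    and "\<And>a b k. (a, b) \<in> U \<Longrightarrow> a < k \<Longrightarrow> k < b \<Longrightarrow> (a, k) \<in> B \<union> U \<or> (k, b) \<in> B \<union> U"
  using assms unfolding forcing_chords_def by fastforce+

lemma forcing_chord_crosses_triangulation:
  assumes B: "\<forall>e\<in>B. diagonal n e" and U: "forcing_chords n B U"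
    and T: "triangulation n T" "B \<inter> T = {}" and ab: "(a, b) \<in> U"
  shows "\<exists>f\<in>T. crosses (a, b) f \<or> crosses f (a, b)"
  using ab
proof (induction "b - a" arbitrary: a b rule: less_induct)
  case less
  show ?case
  proof (rule ccontr)
    assume "\<not> ?case"
    then have free: "\<forall>f\<in>T. \<not> crosses (a, b) f \<and> \<not> crosses f (a, b)"
      by blast
    obtain k where k: "a < k" "k < b" "(a, k) \<in> T \<or> k = Suc a" "(k, b) \<in> T \<or> b = Suc k"
      using triangulation_apex[OF T(1) free] forcing_chordsD(2)[OF U less.prems] by blast
    then obtain x y where xy: "(x, y) = (a, k) \<or> (x, y) = (k, b)" "(x, y) \<in> B \<union> U"
      using forcing_chordsD(3)[OF U less.prems] by blast
    have "Suc x < y"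
      using xy(2) B forcing_chordsD(2)[OF U] unfolding diagonal_def by fastforce
    then have "(x, y) \<in> T"
      using xy(1) k by auto
    moreover have "\<forall>f\<in>T. \<not> crosses (x, y) f \<and> \<not> crosses f (x, y)"
      using \<open>(x, y) \<in> T\<close> T(1) unfolding triangulation_def noncrossing_diags_def by blast
    ultimately have "(x, y) \<in> U" "y - x < b - a" "\<not> (\<exists>f\<in>T. crosses (x, y) f \<or> crosses f (x, y))"
      using xy T(2) k by auto
    then show False
      using less.hyps by blast
  qed
qed

lemma blocker_if_forcing_chords:
  assumes B: "\<forall>e\<in>B. diagonal n e" and U: "forcing_chords n B U"
  shows "blocker n B"
  unfolding blocker_def
proof (intro conjI allI impI B notI)
  fix T assume T: "triangulation n T" "B \<inter> T = {}"
  have "\<forall>f\<in>T. diagonal n f"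
    using T(1) unfolding triangulation_def noncrossing_diags_def by blast
  then have "\<forall>f\<in>T. \<not> crosses (0, n - 1) f \<and> \<not> crosses f (0, n - 1)"
    unfolding diagonal_def crosses_def by fastforce
  then show False
    using forcing_chord_crosses_triangulation[OF B U T forcing_chordsD(1)[OF U]] by blast
qed

section \<open>Blowing up vertices into arcs\<close>

text \<open>Arc \<open>k\<close> of the \<open>n\<close>-gon consists of the vertices \<open>{c k..<c (Suc k)}\<close>, and \<open>blow_up\<close> replaces
  vertex \<open>k\<close> of an \<open>m\<close>-gon by arc \<open>k\<close>.\<close>
locale arc_partition =
  fixes c :: "nat \<Rightarrow> nat" and m n :: nat
  assumes cut_less_Suc: "k < m \<Longrightarrow> c k < c (Suc k)"
    and cut_0: "c 0 = 0"
    and cut_m: "c m = n"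
begin

lemma cut_less: "k < l \<Longrightarrow> l \<le> m \<Longrightarrow> c k < c l"
proof (induction l)
  case (Suc l)
  then show ?case
    using cut_less_Suc[of l] by (cases "k = l") auto
qed simp

lemma cut_le: "k \<le> l \<Longrightarrow> l \<le> m \<Longrightarrow> c k \<le> c l"
  using cut_less[of k l] by (cases "k = l") auto

definition arc :: "nat \<Rightarrow> nat" where
  "arc x = Max {k. k < m \<and> c k \<le> x}"

lemma arc_bounds:
  assumes "x < n"
  shows "arc x < m" "c (arc x) \<le> x" "x < c (Suc (arc x))"
proof -
  let ?K = "{k. k < m \<and> c k \<le> x}"
  have "0 < m"
    using assms cut_0 cut_m by (cases m) auto
  then have "finite ?K" "0 \<in> ?K"
    using cut_0 by auto
  then have "arc x \<in> ?K" and arc_max: "\<And>k. k \<in> ?K \<Longrightarrow> k \<le> arc x"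
    unfolding arc_def using Max_in Max_ge by blast+
  then show "arc x < m" "c (arc x) \<le> x"
    by auto
  show "x < c (Suc (arc x))"
  proof (cases "Suc (arc x) < m")
    case True
    then show ?thesis
      using arc_max[of "Suc (arc x)"] by fastforce
  next
    case False
    then have "Suc (arc x) = m"
      using \<open>arc x < m\<close> by simp
    then show ?thesis
      using assms cut_m by simp
  qed
qed

lemma arc_eqI:
  assumes "k < m" "c k \<le> x" "x < c (Suc k)"
  shows "arc x = k"
proof -
  have "x < n"
    using assms cut_le[of "Suc k" m] cut_m by simp
  note x = arc_bounds[OF this]
  show ?thesis
  proof (rule ccontr)
    assume "arc x \<noteq> k"
    then consider "Suc (arc x) \<le> k" | "Suc k \<le> arc x"
      by linarith
    then show False
    proof cases
      case 1
      then show False using cut_le[OF 1] x assms by simp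
    next
      case 2
      then show False using cut_le[OF 2] x assms by simp
    qed
  qed
qed

lemma arc_iff: "k < m \<Longrightarrow> x < n \<and> arc x = k \<longleftrightarrow> c k \<le> x \<and> x < c (Suc k)"
  using arc_bounds arc_eqI cut_le[of "Suc k" m] cut_m by fastforce

lemma arc_mono:
  assumes "x \<le> y" "y < n"
  shows "arc x \<le> arc y"
proof (rule ccontr)
  assume "\<not> ?thesis"
  then have "c (Suc (arc y)) \<le> c (arc x)"
    using cut_le[of "Suc (arc y)" "arc x"] arc_bounds(1)[of x] assms by simp
  then show False
    using arc_bounds[of x] arc_bounds[of y] assms by simp
qed

lemma less_if_arc_less: "arc x < arc y \<Longrightarrow> x < n \<Longrightarrow> x < y"
  using arc_mono[of y x] by fastforce

lemma arc_0: "0 < m \<Longrightarrow> arc 0 = 0"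
  using arc_eqI[of 0 0] cut_less_Suc[of 0] cut_0 by simp

lemma arc_last: "0 < m \<Longrightarrow> arc (n - 1) = m - 1"
  using arc_eqI[of "m - 1" "n - 1"] cut_less[of "m - 1" m] cut_m by simp

lemma cut_between:
  assumes "x < n" "y < n" "Suc (arc x) < arc y"
  shows "x < c (Suc (arc x))" "c (Suc (arc x)) < y"
  using arc_bounds[OF assms(1)] arc_bounds[OF assms(2)] cut_less[OF assms(3)] by auto

lemma diagonal_if_arc_diagonal:
  assumes xy: "x < n" "y < n" and d: "diagonal m (arc x, arc y)"
  shows "diagonal n (x, y)"
proof -
  have arcs: "Suc (arc x) < arc y" "\<not> (arc x = 0 \<and> arc y = m - 1)"
    using d unfolding diagonal_def by auto
  then have "x < c (Suc (arc x))" "c (Suc (arc x)) < y"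
    using cut_between xy by auto
  moreover have "\<not> (x = 0 \<and> y = n - 1)"
    using arcs arc_0 arc_last arc_bounds(1)[OF xy(2)] by fastforce
  ultimately show ?thesis
    using xy unfolding diagonal_def by auto
qed

lemma crosses_if_arcs_cross:
  assumes "a < n" "b < n" "a' < n" "b' < n"
    and "crosses (arc a, arc b) (arc a', arc b')"
  shows "crosses (a, b) (a', b')"
  using assms less_if_arc_less unfolding crosses_def by auto

definition blow_up :: "(nat \<times> nat) set \<Rightarrow> (nat \<times> nat) set" where
  "blow_up B' = {(x, y). diagonal n (x, y) \<and> (arc x, arc y) \<in> B'}"

lemma forcing_chords_blow_up:
  assumes B': "\<forall>e\<in>B'. diagonal m e" and U': "forcing_chords m B' U'"
  shows "forcing_chords n (blow_up B') {(x, y). x < y \<and> y < n \<and> (arc x, arc y) \<in> U'}"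
    (is "forcing_chords n _ ?U")
proof (rule forcing_chordsI)
  note U'_outer = forcing_chordsD(1)[OF U']
    and U'_long = forcing_chordsD(2)[OF U']
    and U'_split = forcing_chordsD(3)[OF U']
  have "0 < m"
    using U'_long[OF U'_outer] by simp
  have "0 < n - 1"
    using less_if_arc_less[of 0 "n - 1"] U'_long[OF U'_outer] arc_0 arc_last \<open>0 < m\<close> cut_0 cut_m
      cut_less[of 0 m] by simp
  then show "(0, n - 1) \<in> ?U"
    using arc_0 arc_last \<open>0 < m\<close> U'_outer by simp
next
  fix a b assume "(a, b) \<in> ?U"
  then show "Suc a < b \<and> b < n"
    using forcing_chordsD(2)[OF U'] cut_between[of a b] by fastforce
next
  fix a b k assume "(a, b) \<in> ?U" and k: "a < k" "k < b"
  then have "b < n" "(arc a, arc b) \<in> U'"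
    by auto
  then have "arc a \<le> arc k" "arc k \<le> arc b"
    using arc_mono k by auto
  then consider "arc k = arc a" | "arc k = arc b" | "arc a < arc k" "arc k < arc b"
    by linarith
  then show "(a, k) \<in> blow_up B' \<union> ?U \<or> (k, b) \<in> blow_up B' \<union> ?U"
  proof cases
    case 1
    then have "(k, b) \<in> ?U"
      using k \<open>b < n\<close> \<open>(arc a, arc b) \<in> U'\<close> by simp
    then show ?thesis
      by blast
  next
    case 2
    then have "(a, k) \<in> ?U"
      using k \<open>b < n\<close> \<open>(arc a, arc b) \<in> U'\<close> by simp
    then show ?thesis
      by blast
  next
    case 3
    have "(x, y) \<in> blow_up B' \<union> ?U" if "x < y" "y < n" "(arc x, arc y) \<in> B' \<union> U'" for x y
      using that B' diagonal_if_arc_diagonal unfolding blow_up_def by auto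
    moreover have "(arc a, arc k) \<in> B' \<union> U' \<or> (arc k, arc b) \<in> B' \<union> U'"
      using forcing_chordsD(3)[OF U' \<open>(arc a, arc b) \<in> U'\<close>] 3 by blast
    moreover have "k < n"
      using k \<open>b < n\<close> by simp
    ultimately show ?thesis
      using k \<open>b < n\<close> by blast
  qed
qed

lemma blocker_blow_up:
  assumes B': "\<forall>e\<in>B'. diagonal m e" and U': "forcing_chords m B' U'"
  shows "blocker n (blow_up B')"
  by (rule blocker_if_forcing_chords[OF _ forcing_chords_blow_up[OF B' U']]) (auto simp: blow_up_def)

lemma blow_up_eq_UN:
  assumes B': "\<forall>e\<in>B'. diagonal m e"
  shows "blow_up B' = (\<Union>(a, b)\<in>B'. {c a..<c (Suc a)} \<times> {c b..<c (Suc b)})"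
proof -
  have "(x, y) \<in> blow_up B' \<longleftrightarrow> (x, y) \<in> (\<Union>(a, b)\<in>B'. {c a..<c (Suc a)} \<times> {c b..<c (Suc b)})"
    for x y
  proof
    assume "(x, y) \<in> blow_up B'"
    then have "x < n" "y < n" "(arc x, arc y) \<in> B'"
      unfolding blow_up_def diagonal_def by auto
    then show "(x, y) \<in> (\<Union>(a, b)\<in>B'. {c a..<c (Suc a)} \<times> {c b..<c (Suc b)})"
      using arc_bounds by fastforce
  next
    assume "(x, y) \<in> (\<Union>(a, b)\<in>B'. {c a..<c (Suc a)} \<times> {c b..<c (Suc b)})"
    then obtain a b where ab: "(a, b) \<in> B'" "c a \<le> x" "x < c (Suc a)" "c b \<le> y" "y < c (Suc b)"
      by auto
    moreover have "a < m" "b < m"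
      using ab(1) B' unfolding diagonal_def by auto
    ultimately have "x < n" "arc x = a" "y < n" "arc y = b"
      using arc_iff by blast+
    then show "(x, y) \<in> blow_up B'"
      using ab(1) B' diagonal_if_arc_diagonal unfolding blow_up_def by auto
  qed
  then show ?thesis
    by (simp only: set_eq_iff split_paired_All simp_thms)
qed

lemma arc_intervals_disjoint:
  assumes "a < m" "a' < m" "a \<noteq> a'"
  shows "{c a..<c (Suc a)} \<inter> {c a'..<c (Suc a')} = {}"
  using arc_eqI[OF assms(1)] arc_eqI[OF assms(2)] assms(3) by fastforce

lemma card_blow_up:
  assumes B': "\<forall>e\<in>B'. diagonal m e"
  shows "card (blow_up B') = (\<Sum>(a, b)\<in>B'. (c (Suc a) - c a) * (c (Suc b) - c b))"
proof -
  define A where "A = (\<lambda>(a, b). {c a..<c (Suc a)} \<times> {c b..<c (Suc b)})"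
  have B'_less: "a < m \<and> b < m" if "(a, b) \<in> B'" for a b
    using B' that unfolding diagonal_def by fastforce
  have "finite B'"
    by (rule finite_subset[of _ "{..<m} \<times> {..<m}"]) (use B'_less in auto)
  moreover have "\<forall>e\<in>B'. finite (A e)"
    unfolding A_def by auto
  moreover have "A e \<inter> A e' = {}" if "e \<in> B'" "e' \<in> B'" "e \<noteq> e'" for e e'
  proof -
    obtain a b a' b' where e: "e = (a, b)" "e' = (a', b')"
      by (cases e, cases e')
    then have "a \<noteq> a' \<or> b \<noteq> b'"
      using that(3) by auto
    then show ?thesis
      using arc_intervals_disjoint[of a a'] arc_intervals_disjoint[of b b'] B'_less[of a b]
        B'_less[of a' b'] that(1,2) unfolding A_def e by (auto simp: Times_Int_Times)
  qed
  ultimately have "card (\<Union>e\<in>B'. A e) = (\<Sum>e\<in>B'. card (A e))"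
    by (intro card_UN_disjoint) blast+
  then show ?thesis
    using blow_up_eq_UN[OF B'] unfolding A_def by (simp add: case_prod_beta')
qed

text \<open>The chords from \<open>x\<close> to the last vertex before and to the first vertex after the arc of
  \<open>x\<close>, cyclically.\<close>
definition fence :: "nat \<Rightarrow> (nat \<times> nat) set" where
  "fence x = {if arc x = 0 then (x, n - 1) else (c (arc x) - 1, x),
              if Suc (arc x) = m then (0, x) else (x, c (Suc (arc x)))}"

lemma outside_arc:
  assumes "z < n" "arc z \<noteq> arc x" "x < n"
  shows "z < c (arc x) \<or> c (Suc (arc x)) \<le> z"
  using arc_eqI[of "arc x" z] arc_bounds assms by force

lemma fence_subset:
  assumes "x < n" "(p, q) \<in> fence x"
  shows "p < n" "q < n" "p = x \<or> q = x"
  using assms arc_bounds[OF assms(1)] cut_less[of "Suc (arc x)" m] cut_m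
  unfolding fence_def by (auto split: if_splits)

lemma fence_free:
  assumes x: "x < n" and s: "(p, q) \<in> fence x"
  shows "(\<forall>z<n. arc z \<noteq> arc x \<longrightarrow> \<not> (p < z \<and> z < q)) \<or>
    (\<forall>z<n. arc z \<noteq> arc x \<longrightarrow> p \<le> z \<and> z \<le> q)"
proof -
  note far = outside_arc[OF _ _ x] and x_bounds = arc_bounds[OF x]
  consider "arc x = 0" "(p, q) = (x, n - 1)" | "arc x \<noteq> 0" "(p, q) = (c (arc x) - 1, x)"
    | "Suc (arc x) = m" "(p, q) = (0, x)" | "Suc (arc x) \<noteq> m" "(p, q) = (x, c (Suc (arc x)))"
    using s unfolding fence_def by (auto split: if_splits)
  then show ?thesis
  proof cases
    case 1
    then show ?thesis
      using far x_bounds cut_0 by (intro disjI2) fastforce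
  next
    case 2
    then show ?thesis
      using far x_bounds by (intro disjI1) fastforce
  next
    case 3
    then show ?thesis
      using far x_bounds cut_m by (intro disjI2) fastforce
  next
    case 4
    then show ?thesis
      using far x_bounds by (intro disjI1) fastforce
  qed
qed

lemma fence_no_cross:
  assumes x: "x < n" and s: "s \<in> fence x" and ab: "a < n" "b < n"
    and visible: "a = x \<or> arc a \<noteq> arc x" "b = x \<or> arc b \<noteq> arc x"
  shows "\<not> crosses s (a, b) \<and> \<not> crosses (a, b) s"
proof -
  obtain p q where s_eq: "s = (p, q)"
    by (cases s)
  have "p = x \<or> q = x"
    using fence_subset x s unfolding s_eq by blast
  then show ?thesis
    using fence_free[OF x s[unfolded s_eq]] crosses_imp_endpoint_inside_and_outside[of p q a b]
      ab visible unfolding s_eq by fastforce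
qed

lemma fence_crosses_left:
  assumes xy: "x < n" "y < n" and d: "diagonal m (arc x, arc y)"
    and u: "u < n" "arc u = arc x" "u \<noteq> x"
  shows "\<exists>s\<in>fence u. crosses (x, y) s \<or> crosses s (x, y)"
proof -
  have arcs: "Suc (arc x) < arc y" "arc y < m" "\<not> (arc x = 0 \<and> arc y = m - 1)"
    using d unfolding diagonal_def by auto
  have gap: "x < c (Suc (arc x))" "u < c (Suc (arc x))" "c (Suc (arc x)) < y"
    using cut_between[OF xy arcs(1)] arc_bounds(3)[OF u(1)] u(2) by auto
  consider "u < x" | "x < u" "arc x = 0" | "x < u" "arc x \<noteq> 0"
    using u(3) by linarith
  then show ?thesis
  proof cases
    case 1
    then have "(u, c (Suc (arc x))) \<in> fence u" "crosses (u, c (Suc (arc x))) (x, y)"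
      using arcs gap u unfolding fence_def crosses_def by auto
    then show ?thesis by blast
  next
    case 2
    have "c (Suc (arc y)) \<le> c (m - 1)" "c (m - 1) < n"
      using cut_le[of "Suc (arc y)" "m - 1"] cut_less[of "m - 1" m] cut_m arcs 2 by auto
    then have "y < n - 1"
      using arc_bounds(3)[OF xy(2)] by linarith
    then have "(u, n - 1) \<in> fence u" "crosses (x, y) (u, n - 1)"
      using 2 gap u unfolding fence_def crosses_def by auto
    then show ?thesis by blast
  next
    case 3
    have "c (arc x) \<le> x" "0 < c (arc x)"
      using arc_bounds xy cut_less[of 0 "arc x"] cut_0 arcs 3 by auto
    then have "(c (arc x) - 1, u) \<in> fence u" "crosses (c (arc x) - 1, u) (x, y)"
      using 3 gap u unfolding fence_def crosses_def by auto
    then show ?thesis by blast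
  qed
qed

lemma fence_crosses_right:
  assumes xy: "x < n" "y < n" and d: "diagonal m (arc x, arc y)"
    and v: "v < n" "arc v = arc y" "v \<noteq> y"
  shows "\<exists>s\<in>fence v. crosses (x, y) s \<or> crosses s (x, y)"
proof -
  have arcs: "Suc (arc x) < arc y" "arc y < m" "\<not> (arc x = 0 \<and> arc y = m - 1)"
    using d unfolding diagonal_def by auto
  have gap: "x < c (Suc (arc x))" "c (Suc (arc x)) < c (arc y)"
    using cut_between(1)[OF xy arcs(1)] cut_less[of "Suc (arc x)" "arc y"] arcs by auto
  have y_bounds: "c (arc y) \<le> y" "y < c (Suc (arc y))" "c (arc y) \<le> v" "v < c (Suc (arc y))"
    using arc_bounds[OF xy(2)] arc_bounds[OF v(1)] v(2) by auto
  consider "y < v" | "v < y" "Suc (arc y) = m" | "v < y" "Suc (arc y) \<noteq> m"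
    using v(3) by linarith
  then show ?thesis
  proof cases
    case 1
    then have "(c (arc y) - 1, v) \<in> fence v" "crosses (x, y) (c (arc y) - 1, v)"
      using arcs gap y_bounds v unfolding fence_def crosses_def by auto
    then show ?thesis by blast
  next
    case 2
    then have "arc x \<noteq> 0"
      using arcs by auto
    then have "0 < c (arc x)"
      using cut_less[of 0 "arc x"] cut_0 arcs by simp
    then have "0 < x"
      using arc_bounds xy by (meson leD neq0_conv order_less_le_trans)
    then have "(0, v) \<in> fence v" "crosses (0, v) (x, y)"
      using 2 gap y_bounds v unfolding fence_def crosses_def by auto
    then show ?thesis by blast
  next
    case 3
    then have "(v, c (Suc (arc y))) \<in> fence v" "crosses (x, y) (v, c (Suc (arc y)))"
      using gap y_bounds v unfolding fence_def crosses_def by auto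
    then show ?thesis by blast
  qed
qed

lemma fence_endpoint_arc:
  assumes x: "x < n" and s: "(p, q) \<in> fence x" and z: "z \<in> {p, q}" "z \<noteq> x"
  shows "arc z = arc x - 1 \<or> arc z = Suc (arc x) \<or> (arc x = 0 \<and> z = n - 1) \<or> (Suc (arc x) = m \<and> z = 0)"
proof -
  have "arc x < m"
    using arc_bounds[OF x] by simp
  have "(arc x = 0 \<and> z = n - 1) \<or> (arc x \<noteq> 0 \<and> z = c (arc x) - 1) \<or>
      (Suc (arc x) = m \<and> z = 0) \<or> (Suc (arc x) \<noteq> m \<and> z = c (Suc (arc x)))"
    using s z unfolding fence_def by (simp split: if_splits) blast+
  moreover have "arc (c (arc x) - 1) = arc x - 1" if "arc x \<noteq> 0"
  proof (rule arc_eqI)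
    show "c (arc x - 1) \<le> c (arc x) - 1" "c (arc x) - 1 < c (Suc (arc x - 1))"
      using cut_less[of "arc x - 1" "arc x"] \<open>arc x < m\<close> that by auto
  qed (use \<open>arc x < m\<close> in simp)
  moreover have "arc (c (Suc (arc x))) = Suc (arc x)" if "Suc (arc x) \<noteq> m"
    using arc_eqI[of "Suc (arc x)"] cut_less_Suc[of "Suc (arc x)"] \<open>arc x < m\<close> that by simp
  ultimately show ?thesis
    by auto
qed

lemma fences_no_cross:
  assumes uv: "u < n" "v < n" and d: "diagonal m (arc u, arc v)"
    and s: "s \<in> fence u \<union> fence v" and s': "s' \<in> fence u \<union> fence v"
  shows "\<not> crosses s s'"
proof -
  have arcs: "Suc (arc u) < arc v" "arc v < m" "\<not> (arc u = 0 \<and> arc v = m - 1)"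
    using d unfolding diagonal_def by auto
  have "0 < m"
    using arcs by simp
  have far_v: "a < n \<and> arc a \<noteq> arc u" if "(p, q) \<in> fence v" "a \<in> {p, q}" for p q a
    using that(2) fence_subset[OF uv(2) that(1)] fence_endpoint_arc[OF uv(2) that] arcs arc_0[OF \<open>0 < m\<close>]
    by (cases "a = v") auto
  have same: "\<not> crosses s s'" if "s \<in> fence x" "s' \<in> fence x" "x < n" for x
    using that fence_subset[of x "fst s" "snd s"] fence_subset[of x "fst s'" "snd s'"]
    unfolding crosses_def by (auto split: prod.splits)
  show ?thesis
    using s s'
  proof (elim UnE)
    assume "s \<in> fence u" "s' \<in> fence v"
    then show ?thesis
      using fence_no_cross[OF uv(1) \<open>s \<in> fence u\<close>] far_v[of "fst s'" "snd s'"] by (cases s') auto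
  next
    assume "s \<in> fence v" "s' \<in> fence u"
    then show ?thesis
      using fence_no_cross[OF uv(1) \<open>s' \<in> fence u\<close>] far_v[of "fst s" "snd s"] by (cases s) auto
  qed (use same uv in blast)+
qed

lemma section_strict_mono_on:
  assumes r: "\<And>k. k < m \<Longrightarrow> r k < n \<and> arc (r k) = k"
  shows "strict_mono_on {..<m} r"
  using r less_if_arc_less by (intro strict_mono_onI) (metis lessThan_iff)

lemma image_noncrossing:
  assumes S': "noncrossing_diags m S'" and r: "\<And>k. k < m \<Longrightarrow> r k < n \<and> arc (r k) = k"
  shows "noncrossing_diags n ((\<lambda>(a, b). (r a, r b)) ` S')"
proof -
  have S'_diag: "\<And>a b. (a, b) \<in> S' \<Longrightarrow> diagonal m (a, b) \<and> a < m \<and> b < m"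
    using S' unfolding noncrossing_diags_def diagonal_def by auto
  have "diagonal n (r a, r b)" if "(a, b) \<in> S'" for a b
    using diagonal_if_arc_diagonal[of "r a" "r b"] S'_diag[OF that] r by simp
  moreover have "\<not> crosses (r a, r b) (r a', r b')" if "(a, b) \<in> S'" "(a', b') \<in> S'" for a b a' b'
    using crosses_strict_mono_on_iff[OF section_strict_mono_on[OF r], of a b a' b']
      S'_diag[OF that(1)] S'_diag[OF that(2)] S' that unfolding noncrossing_diags_def by auto
  ultimately show ?thesis
    unfolding noncrossing_diags_def by auto
qed

lemma crossed_by_image:
  assumes r: "\<And>k. k < m \<Longrightarrow> r k < n \<and> arc (r k) = k" and xy: "x < n" "y < n"
    and ab: "a < m" "b < m" and cr: "crosses (arc x, arc y) (a, b) \<or> crosses (a, b) (arc x, arc y)"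
  shows "crosses (x, y) (r a, r b) \<or> crosses (r a, r b) (x, y)"
  using crosses_if_arcs_cross[of x y "r a" "r b"] crosses_if_arcs_cross[of "r a" "r b" x y] r[OF ab(1)] r[OF ab(2)] xy cr
  by auto

definition representative :: "nat \<Rightarrow> nat \<Rightarrow> nat \<Rightarrow> nat" where
  "representative u v k = (if k = arc u then u else if k = arc v then v else c k)"

definition lifted_witness :: "nat \<Rightarrow> nat \<Rightarrow> (nat \<times> nat) set \<Rightarrow> (nat \<times> nat) set" where
  "lifted_witness u v S' = {s \<in> (\<lambda>(a, b). (representative u v a, representative u v b)) ` S' \<union>
     fence u \<union> fence v. diagonal n s}"

lemma representative_section:
  assumes "u < n" "v < n" "k < m"
  shows "representative u v k < n \<and> arc (representative u v k) = k"
  using assms arc_eqI[of k "c k"] cut_less_Suc[of k] cut_less[of k m] cut_m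
  unfolding representative_def by auto

lemma representative_chord_no_cross_fence:
  assumes uv: "u < n" "v < n" "arc u \<noteq> arc v" and ab: "a < m" "b < m"
    and f: "f \<in> fence u \<union> fence v"
  shows "\<not> crosses (representative u v a, representative u v b) f \<and>
    \<not> crosses f (representative u v a, representative u v b)"
proof -
  let ?r = "representative u v"
  note r = representative_section[OF uv(1,2)]
  have visible: "?r k = u \<or> arc (?r k) \<noteq> arc u" "?r k = v \<or> arc (?r k) \<noteq> arc v" if "k < m" for k
    using r[OF that] uv(3) unfolding representative_def by auto
  show ?thesis
    using f
  proof
    assume "f \<in> fence u"
    then show ?thesis
      using fence_no_cross[OF uv(1) _ _ _ visible(1)[OF ab(1)] visible(1)[OF ab(2)]] r ab by blast
  next
    assume "f \<in> fence v"
    then show ?thesis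
      using fence_no_cross[OF uv(2) _ _ _ visible(2)[OF ab(1)] visible(2)[OF ab(2)]] r ab by blast
  qed
qed

lemma lifted_witness_noncrossing:
  assumes uv: "u < n" "v < n" and d: "diagonal m (arc u, arc v)" and S': "noncrossing_diags m S'"
  shows "noncrossing_diags n (lifted_witness u v S')"
proof -
  let ?r = "representative u v"
  let ?R = "(\<lambda>(a, b). (?r a, ?r b)) ` S'"
  have "arc u \<noteq> arc v"
    using d unfolding diagonal_def by auto
  have R_fence: "\<not> crosses e f \<and> \<not> crosses f e" if "e \<in> ?R" "f \<in> fence u \<union> fence v" for e f
  proof -
    obtain a b where "(a, b) \<in> S'" "e = (?r a, ?r b)"
      using \<open>e \<in> ?R\<close> by auto
    moreover have "a < m" "b < m"
      using S' \<open>(a, b) \<in> S'\<close> unfolding noncrossing_diags_def diagonal_def by auto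
    ultimately show ?thesis
      using representative_chord_no_cross_fence[OF uv \<open>arc u \<noteq> arc v\<close> _ _ that(2)] by blast
  qed
  have "\<not> crosses e f" if ef: "e \<in> lifted_witness u v S'" "f \<in> lifted_witness u v S'" for e f
  proof -
    consider "e \<in> ?R" "f \<in> ?R" | "e \<in> ?R" "f \<in> fence u \<union> fence v" | "e \<in> fence u \<union> fence v" "f \<in> ?R"
      | "e \<in> fence u \<union> fence v" "f \<in> fence u \<union> fence v"
      using ef unfolding lifted_witness_def by blast
    then show ?thesis
    proof cases
      case 1
      then show ?thesis
        using image_noncrossing[OF S' representative_section[OF uv]]
        unfolding noncrossing_diags_def by blast
    next
      case 4
      then show ?thesis
        using fences_no_cross[OF uv d] by blast
    qed (use R_fence in blast)+
  qed
  then show ?thesis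
    unfolding noncrossing_diags_def lifted_witness_def by blast
qed

lemma crossed_by_lifted_witnessI:
  assumes s: "s \<in> (\<lambda>(a, b). (representative u v a, representative u v b)) ` S' \<union> fence u \<union> fence v"
    and "snd s < n" "y < n" and cr: "crosses (x, y) s \<or> crosses s (x, y)"
  shows "crossed_by (lifted_witness u v S') (x, y)"
proof -
  obtain p q where s_eq: "s = (p, q)"
    by (cases s)
  have "diagonal n s"
    using assms(2,3) cr diagonal_if_crosses[of p q x y n] unfolding s_eq by auto
  then have "s \<in> lifted_witness u v S'"
    using s unfolding lifted_witness_def by blast
  then show ?thesis
    using cr unfolding crossed_by_def by blast
qed

text \<open>A diagonal of the blow-up joining the same two arcs as \<open>(u, v)\<close> is crossed by a fence of
  \<open>u\<close> or \<open>v\<close>; any other one lies over a diagonal crossed by \<open>S'\<close> and is crossed by its lift.\<close>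
lemma lifted_witness_crosses:
  assumes B': "\<forall>e\<in>B'. diagonal m e" and uv: "(u, v) \<in> blow_up B'"
    and S': "noncrossing_diags m S'" "\<forall>b\<in>B' - {(arc u, arc v)}. crossed_by S' b"
    and xy: "(x, y) \<in> blow_up B' - {(u, v)}"
  shows "crossed_by (lifted_witness u v S') (x, y)"
proof -
  let ?r = "representative u v"
  have "u < n" "v < n" "x < n" "y < n" "(arc x, arc y) \<in> B'" "(x, y) \<noteq> (u, v)"
    using uv xy unfolding blow_up_def diagonal_def by auto
  note r = representative_section[OF \<open>u < n\<close> \<open>v < n\<close>]
  show ?thesis
  proof (cases "(arc x, arc y) = (arc u, arc v)")
    case False
    then obtain a a' where "(a, a') \<in> S'" "crosses (arc x, arc y) (a, a') \<or> crosses (a, a') (arc x, arc y)"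
      using S'(2) \<open>(arc x, arc y) \<in> B'\<close> unfolding crossed_by_def by fastforce
    moreover have "a < m" "a' < m"
      using S'(1) \<open>(a, a') \<in> S'\<close> unfolding noncrossing_diags_def diagonal_def by auto
    ultimately show ?thesis
      using crossed_by_lifted_witnessI[of "(?r a, ?r a')" u v S' y x] crossed_by_image[OF r \<open>x < n\<close> \<open>y < n\<close>]
        r \<open>y < n\<close> by force
  next
    case True
    have "diagonal m (arc x, arc y)"
      using B' \<open>(arc x, arc y) \<in> B'\<close> by blast
    then obtain s where "s \<in> fence u \<union> fence v" "crosses (x, y) s \<or> crosses s (x, y)"
      using fence_crosses_left[OF \<open>x < n\<close> \<open>y < n\<close> _ \<open>u < n\<close>]
        fence_crosses_right[OF \<open>x < n\<close> \<open>y < n\<close> _ \<open>v < n\<close>] True \<open>(x, y) \<noteq> (u, v)\<close>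
      by fastforce
    then show ?thesis
      using crossed_by_lifted_witnessI[of s u v S' y x] fence_subset[OF \<open>u < n\<close>] fence_subset[OF \<open>v < n\<close>]
        \<open>y < n\<close> by (cases s) auto
  qed
qed

lemma saturated_blocker_blow_up:
  assumes B': "\<forall>e\<in>B'. diagonal m e" and U': "forcing_chords m B' U'"
    and witnesses: "\<forall>e\<in>B'. \<exists>S'. noncrossing_diags m S' \<and> (\<forall>b\<in>B' - {e}. crossed_by S' b)"
  shows "saturated_blocker n (blow_up B')"
proof (rule saturated_blockerI)
  show "blocker n (blow_up B')"
    using blocker_blow_up[OF B' U'] .
  show "\<forall>e\<in>blow_up B'. \<exists>S. noncrossing_diags n S \<and> (\<forall>b\<in>blow_up B' - {e}. crossed_by S b)"
  proof (intro ballI)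
    fix e assume e: "e \<in> blow_up B'"
    obtain u v where e_eq: "e = (u, v)"
      by (cases e)
    then have uv: "u < n" "v < n" "diagonal m (arc u, arc v)"
      using e B' unfolding blow_up_def diagonal_def by auto
    obtain S' where S': "noncrossing_diags m S'" "\<forall>b\<in>B' - {(arc u, arc v)}. crossed_by S' b"
      using witnesses e unfolding e_eq blow_up_def by blast
    have "noncrossing_diags n (lifted_witness u v S')"
      using lifted_witness_noncrossing[OF uv S'(1)] .
    moreover have "crossed_by (lifted_witness u v S') b" if "b \<in> blow_up B' - {e}" for b
      using lifted_witness_crosses[OF B' e[unfolded e_eq] S', of "fst b" "snd b"] that
      unfolding e_eq by simp
    ultimately show "\<exists>S. noncrossing_diags n S \<and> (\<forall>b\<in>blow_up B' - {e}. crossed_by S b)"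
      by blast
  qed
qed

end

lemma arc_partition_sum_list:
  assumes "0 \<notin> set ls"
  shows "arc_partition (\<lambda>k. sum_list (take k ls)) (length ls) (sum_list ls)"
proof
  fix k assume "k < length ls"
  moreover have "ls ! k \<noteq> 0"
    using nth_mem[OF \<open>k < length ls\<close>] assms by metis
  ultimately show "sum_list (take k ls) < sum_list (take (Suc k) ls)"
    by (simp add: take_Suc_conv_app_nth)
qed simp_all

lemma card_blow_up_sum_list:
  assumes ls: "0 \<notin> set ls" and B': "\<forall>e\<in>B'. diagonal (length ls) e"
  shows "card (arc_partition.blow_up (\<lambda>k. sum_list (take k ls)) (length ls) (sum_list ls) B') =
    (\<Sum>(a, b)\<in>B'. ls ! a * ls ! b)"
proof -
  interpret arc_partition "\<lambda>k. sum_list (take k ls)" "length ls" "sum_list ls"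
    using arc_partition_sum_list[OF ls] .
  have "sum_list (take (Suc k) ls) - sum_list (take k ls) = ls ! k" if "k < length ls" for k
    using that by (simp add: take_Suc_conv_app_nth)
  then show ?thesis
    using card_blow_up[OF B'] B' unfolding diagonal_def by (auto intro!: sum.cong)
qed

section \<open>A saturated blocker of the 10-gon\<close>

definition B10 :: "(nat \<times> nat) set" where
  "B10 = {(0, 3), (0, 5), (0, 8), (1, 5), (1, 6), (1, 8), (2, 6), (2, 7), (2, 9), (3, 7), (3, 9),
          (4, 6), (4, 7), (5, 8), (5, 9)}"

definition U10 :: "(nat \<times> nat) set" where
  "U10 = {(0, 6), (0, 7), (0, 9), (1, 7), (1, 9), (4, 8), (4, 9)}"

definition B10_witness :: "nat \<times> nat \<Rightarrow> (nat \<times> nat) set" where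
  "B10_witness e =
    (if e = (0, 3) then {(0, 3), (0, 6), (1, 3), (3, 5), (3, 6), (6, 9), (7, 9)}
     else if e = (0, 5) then {(0, 2), (0, 5), (0, 6), (2, 5), (3, 5), (6, 9), (7, 9)}
     else if e = (0, 8) then {(0, 2), (0, 8), (2, 8), (3, 5), (3, 6), (3, 8), (6, 8)}
     else if e = (1, 5) then {(1, 5), (1, 7), (1, 9), (2, 5), (3, 5), (5, 7), (7, 9)}
     else if e = (1, 6) then {(1, 3), (1, 6), (1, 9), (3, 5), (3, 6), (6, 9), (7, 9)}
     else if e = (1, 8) then {(1, 8), (1, 9), (2, 8), (3, 5), (3, 6), (3, 8), (6, 8)}
     else if e = (2, 6) then {(0, 2), (0, 6), (2, 6), (3, 5), (3, 6), (6, 9), (7, 9)}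
     else if e = (2, 7) then {(1, 7), (1, 9), (2, 5), (2, 7), (3, 5), (5, 7), (7, 9)}
     else if e = (2, 9) then {(1, 9), (2, 8), (2, 9), (3, 5), (3, 6), (3, 8), (6, 8)}
     else if e = (3, 7) then {(1, 3), (1, 7), (1, 9), (3, 5), (3, 7), (5, 7), (7, 9)}
     else if e = (3, 9) then {(1, 3), (1, 9), (3, 5), (3, 6), (3, 9), (6, 9), (7, 9)}
     else if e = (4, 6) then {(1, 4), (1, 9), (2, 4), (4, 6), (4, 9), (6, 9), (7, 9)}
     else if e = (4, 7) then {(1, 4), (1, 9), (2, 4), (4, 7), (4, 9), (5, 7), (7, 9)}
     else if e = (5, 8) then {(1, 4), (1, 9), (2, 4), (4, 8), (4, 9), (5, 8), (6, 8)}
     else {(1, 4), (1, 9), (2, 4), (4, 9), (5, 9), (6, 9), (7, 9)})"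

lemma B10_diagonals: "\<forall>e\<in>B10. diagonal 10 e"
  by code_simp

lemma forcing_chords_B10_U10: "forcing_chords 10 B10 U10"
  by code_simp

lemma B10_witnesses:
  "\<forall>e\<in>B10. noncrossing_diags 10 (B10_witness e) \<and> (\<forall>b\<in>B10 - {e}. crossed_by (B10_witness e) b)"
  by code_simp

lemma blocker_of_B10_blow_up:
  assumes "1 \<le> p" "1 \<le> q" "1 \<le> u" "1 \<le> v"
  shows "\<exists>B. nt_blocker (p + q + u + v + 7) (2 * p + q + (p + q) * (u + v) + u * v + u + 9) B"
proof -
  define ls where "ls = [p, q, 1, 2, 1, u, 1, 1, v, 1]"
  have ls: "0 \<notin> set ls" "length ls = 10" "sum_list ls = p + q + u + v + 7"
    using assms unfolding ls_def by auto
  interpret arc_partition "\<lambda>k. sum_list (take k ls)" 10 "p + q + u + v + 7"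
    using arc_partition_sum_list[OF ls(1)] ls(2,3) by simp
  have "saturated_blocker (p + q + u + v + 7) (blow_up B10)"
    using saturated_blocker_blow_up[OF B10_diagonals forcing_chords_B10_U10] B10_witnesses by blast
  have "card (blow_up B10) = (\<Sum>(a, b)\<in>B10. ls ! a * ls ! b)"
    using card_blow_up_sum_list[OF ls(1), of B10] B10_diagonals unfolding ls(2,3) by simp
  also have "\<dots> = 2 * p + q + (p + q) * (u + v) + u * v + u + 9"
    unfolding B10_def ls_def by (simp add: algebra_simps)
  finally have "card (blow_up B10) = 2 * p + q + (p + q) * (u + v) + u * v + u + 9" .
  with \<open>saturated_blocker (p + q + u + v + 7) (blow_up B10)\<close> show ?thesis
    unfolding nt_blocker_def by blast
qed

section \<open>The sizes of the blown-up blockers\<close>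

lemma interval_chain_cover:
  fixes lo hi :: "nat \<Rightarrow> int"
  assumes "a \<le> b" and chain: "\<And>k. a \<le> k \<Longrightarrow> k < b \<Longrightarrow> lo k \<le> hi (Suc k) + 1"
    and "lo b \<le> t" "t \<le> hi a"
  shows "\<exists>k. a \<le> k \<and> k \<le> b \<and> lo k \<le> t \<and> t \<le> hi k"
  using assms
proof (induction b)
  case (Suc b)
  show ?case
  proof (cases "t \<le> hi (Suc b)")
    case True
    then show ?thesis
      using Suc.prems(1,3) by auto
  next
    case False
    then have "a \<le> b"
      using Suc.prems(1,4) by (cases "a = Suc b") auto
    moreover have "lo b \<le> t"
      using Suc.prems(2)[of b] False calculation by auto
    ultimately show ?thesis
      using Suc.IH Suc.prems(2,4) by fastforce
  qed
qed auto

text \<open>The size of the blow-up of \<open>B10\<close> minus \<open>p\<close>, for \<open>p + q = P\<close> and \<open>u + v = w\<close> with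
  \<open>u = \<lceil>w/2\<rceil>\<close> and \<open>v = \<lfloor>w/2\<rfloor>\<close>.\<close>
definition balanced_size :: "nat \<Rightarrow> nat \<Rightarrow> nat" where
  "balanced_size P w = P * w + ((w + 1) div 2) * (w div 2 + 1) + P + 9"

lemma balanced_size_Suc: "balanced_size P (Suc w) \<le> balanced_size (Suc P) w + P"
proof -
  obtain s where "w = 2 * s \<or> w = 2 * s + 1"
    by (metis oddE evenE)
  then show ?thesis
  proof
    assume w: "w = 2 * s"
    have "(Suc w + 1) div 2 = s + 1" "Suc w div 2 = s" "(w + 1) div 2 = s" "w div 2 = s"
      using w by simp_all
    then show ?thesis
      unfolding balanced_size_def using w by (simp add: algebra_simps)
  next
    assume w: "w = 2 * s + 1"
    have "(Suc w + 1) div 2 = s + 1" "Suc w div 2 = s + 1" "(w + 1) div 2 = s + 1" "w div 2 = s"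
      using w by simp_all
    then show ?thesis
      unfolding balanced_size_def using w by (simp add: algebra_simps)
  qed
qed

lemma balanced_size_third_bound:
  assumes "25 \<le> n"
  defines "a \<equiv> (n - 7) div 3"
  shows "5 * int n ^ 2 - 48 * int n + 205 \<le> 16 * (int (balanced_size a (n - 7 - a)) + int a - 1)"
proof -
  have "6 \<le> a"
    using assms by simp
  then have sq: "6 * int a \<le> int a * int a"
    by (simp add: mult_right_mono)
  define r where "r = (n - 7) mod 3"
  have r: "r < 3" "n = 3 * a + r + 7"
    using div_mult_mod_eq[of "n - 7" 3] assms(1) unfolding a_def r_def by linarith+
  then consider "r = 0" | "r = 1" | "r = 2"
    by linarith
  then show ?thesis
  proof cases
    case 1
    then have "balanced_size a (n - 7 - a) = 3 * a * a + 2 * a + 9"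
      using r unfolding balanced_size_def by (simp add: algebra_simps)
    then show ?thesis
      using r 1 sq by (simp add: power2_eq_square algebra_simps)
  next
    case 2
    then have "balanced_size a (n - 7 - a) = 3 * a * a + 4 * a + 10"
      using r unfolding balanced_size_def by (simp add: algebra_simps)
    then show ?thesis
      using r 2 sq by (simp add: power2_eq_square algebra_simps)
  next
    case 3
    then have "balanced_size a (n - 7 - a) = 3 * a * a + 6 * a + 11"
      using r unfolding balanced_size_def by (simp add: algebra_simps)
    then show ?thesis
      using r 3 sq \<open>6 \<le> a\<close> by (simp add: power2_eq_square algebra_simps, linarith)
  qed
qed

lemma balanced_size_interval:
  assumes n: "25 \<le> n"
    and t_lower: "int n ^ 2 + 4 * int n - 16 \<le> 8 * t"
    and t_upper: "16 * t \<le> 5 * int n ^ 2 - 48 * int n + 205"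
  obtains P where "(n - 7) div 3 \<le> P" "P \<le> n - 9"
    "int (balanced_size P (n - 7 - P)) < t" "t < int (balanced_size P (n - 7 - P)) + int P"
proof -
  define lo hi :: "nat \<Rightarrow> int"
    where "lo P = int (balanced_size P (n - 7 - P)) + 1"
      and "hi P = int (balanced_size P (n - 7 - P)) + int P - 1" for P
  have "\<exists>P. (n - 7) div 3 \<le> P \<and> P \<le> n - 9 \<and> lo P \<le> t \<and> t \<le> hi P"
  proof (rule interval_chain_cover)
    show "(n - 7) div 3 \<le> n - 9"
      using n by simp
    show "lo k \<le> hi (Suc k) + 1" if "k < n - 9" for k
    proof -
      have "n - 7 - k = Suc (n - 7 - Suc k)"
        using that by simp
      then show ?thesis
        using balanced_size_Suc[of k "n - 7 - Suc k"] unfolding lo_def hi_def by simp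
    qed
    have "balanced_size (n - 9) (n - 7 - (n - 9)) = 3 * n - 16"
      using n unfolding balanced_size_def by simp
    moreover have "25 * int n \<le> int n ^ 2"
      using n by (simp add: power2_eq_square mult_right_mono)
    ultimately show "lo (n - 9) \<le> t"
      using t_lower n unfolding lo_def by simp
    show "t \<le> hi ((n - 7) div 3)"
      using balanced_size_third_bound[OF n] t_upper unfolding hi_def by (simp add: algebra_simps)
  qed
  then show ?thesis
    using that unfolding lo_def hi_def by fastforce
qed

lemma balanced_sizes_cover:
  assumes n: "25 \<le> n"
    and t_lower: "int n ^ 2 + 4 * int n - 16 \<le> 8 * t"
    and t_upper: "16 * t \<le> 5 * int n ^ 2 - 48 * int n + 205"
  obtains p q u v :: nat where "1 \<le> p" "1 \<le> q" "1 \<le> u" "1 \<le> v" "p + q + u + v + 7 = n"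
    "t = int (2 * p + q + (p + q) * (u + v) + u * v + u + 9)"
proof -
  obtain P where P: "(n - 7) div 3 \<le> P" "P \<le> n - 9"
    "int (balanced_size P (n - 7 - P)) < t" "t < int (balanced_size P (n - 7 - P)) + int P"
    using balanced_size_interval[OF assms] .
  define w where "w = n - 7 - P"
  define p where "p = nat (t - int (balanced_size P w))"
  define u where "u = (w + 1) div 2"
  define v where "v = w div 2"
  have "1 \<le> p" "p < P" "t = int (balanced_size P w) + int p"
    using P(3,4) unfolding p_def w_def by auto
  moreover have "2 \<le> w" "u + v = w" "1 \<le> u" "1 \<le> v"
    using P(2) n unfolding w_def u_def v_def by auto
  moreover have "balanced_size P w = P * (u + v) + u * v + u + P + 9"
    using \<open>u + v = w\<close> unfolding balanced_size_def u_def[symmetric] v_def[symmetric]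
    by (simp add: algebra_simps)
  ultimately show ?thesis
    using that[of p "P - p" u v] P(2) n unfolding w_def by (simp add: algebra_simps)
qed

theorem lemma3p4:
  fixes n :: nat and t :: int
  assumes "n \<ge> 25"
    and "real n ^ 2 / 8 + real n / 2 - 2 \<le> real_of_int t"
    and "real_of_int t \<le> real n ^ 2 / 4 + real n ^ 2 / 16 - 3 * real n + 205 / 16"
  shows "\<exists>B. nt_blocker n (nat t) B"
proof -
  have "real_of_int (int n ^ 2 + 4 * int n - 16) \<le> real_of_int (8 * t)"
    using assms(2) by simp
  then have t_lower: "int n ^ 2 + 4 * int n - 16 \<le> 8 * t"
    by (simp only: of_int_le_iff)
  have "real_of_int (16 * t) \<le> real_of_int (5 * int n ^ 2 - 48 * int n + 205)"
    using assms(3) by simp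
  then have t_upper: "16 * t \<le> 5 * int n ^ 2 - 48 * int n + 205"
    by (simp only: of_int_le_iff)
  obtain p q u v where pquv: "1 \<le> p" "1 \<le> q" "1 \<le> u" "1 \<le> v"
    and n_eq: "p + q + u + v + 7 = n" and t_eq: "t = int (2 * p + q + (p + q) * (u + v) + u * v + u + 9)"
    using balanced_sizes_cover[OF assms(1) t_lower t_upper] .
  show ?thesis
    using blocker_of_B10_blow_up[OF pquv] unfolding n_eq t_eq nat_int .
qed

end
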